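(* Let $(X,Y)$ be any one of the pairs $(F,L)$, $(L,F)$, $(J,j)$, $(j,J)$, $(P,Q)$, $(Q,P)$. Then for all integers $a,b,c,d,e,m$, $$(X_{d-a}Y_{e-b}-X_{e-a}Y_{d-b})X_{m-c}=(X_{d-c}Y_{e-b}-X_{e-c}Y_{d-b})X_{m-a}+(X_{d-a}X_{e-c}-X_{e-a}X_{d-c})Y_{m-b}.$$
   Context: All sequences are indexed by $n\in\mathbb Z$. Fibonacci numbers $F_n$ and Lucas numbers $L_n$: $F_n=F_{n-1}+F_{n-2}$, $L_n=L_{n-1}+L_{n-2}$ for all $n\in\mathbb Z$, with $F_0=0,F_1=1,L_0=2,L_1=1$ (so $F_{-n}=(-1)^{n-1}F_n$, $L_{-n}=(-1)^nL_n$). Jacobsthal numbers $J_n$ and Jacobsthal–Lucas numbers $j_n$: $J_n=J_{n-1}+2J_{n-2}$, $j_n=j_{n-1}+2j_{n-2}$ for all $n\in\mathbb Z$, with $J_0=0,J_1=1,j_0=2,j_1=1$ (so $J_{-n}=(-1)^{n-1}2^{-n}J_n$, $j_{-n}=(-1)^n2^{-n}j_n$, rational for negative index). Pell numbers $P_n$ and Pell–Lucas numbers $Q_n$: $P_n=2P_{n-1}+P_{n-2}$, $Q_n=2Q_{n-1}+Q_{n-2}$ for all $n\in\mathbb Z$, with $P_0=0,P_1=1,Q_0=2,Q_1=2$ (so $P_{-n}=(-1)^{n-1}P_n$, $Q_{-n}=(-1)^nQ_n$). *)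

theory Defs
  imports Complex_Main
begin

text \<open>Second-order linear recurrence w(n) = p w(n-1) + q w(n-2) for all integers n,
  with w(0) = a, w(1) = b (q nonzero).\<close>

fun rec_fwd :: "real \<Rightarrow> real \<Rightarrow> real \<Rightarrow> real \<Rightarrow> nat \<Rightarrow> real" where
  "rec_fwd p q a b 0 = a"
| "rec_fwd p q a b (Suc 0) = b"
| "rec_fwd p q a b (Suc (Suc n)) = p * rec_fwd p q a b (Suc n) + q * rec_fwd p q a b n"

fun rec_bwd :: "real \<Rightarrow> real \<Rightarrow> real \<Rightarrow> real \<Rightarrow> nat \<Rightarrow> real" where
  "rec_bwd p q a b 0 = a"
| "rec_bwd p q a b (Suc 0) = (b - p * a) / q"
| "rec_bwd p q a b (Suc (Suc n)) = (rec_bwd p q a b n - p * rec_bwd p q a b (Suc n)) / q"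

definition lin_rec :: "real \<Rightarrow> real \<Rightarrow> real \<Rightarrow> real \<Rightarrow> int \<Rightarrow> real" where
  "lin_rec p q a b n = (if 0 \<le> n then rec_fwd p q a b (nat n) else rec_bwd p q a b (nat (- n)))"

definition Fib :: "int \<Rightarrow> real" where "Fib = lin_rec 1 1 0 1"
definition Luc :: "int \<Rightarrow> real" where "Luc = lin_rec 1 1 2 1"
definition Jac :: "int \<Rightarrow> real" where "Jac = lin_rec 1 2 0 1"
definition JacL :: "int \<Rightarrow> real" where "JacL = lin_rec 1 2 2 1"
definition Pell :: "int \<Rightarrow> real" where "Pell = lin_rec 2 1 0 1"
definition PellL :: "int \<Rightarrow> real" where "PellL = lin_rec 2 1 2 2"

end

theory Submission
  imports Defs
begin

text \<open>All six sequences solve a recurrence w(n+2) = p w(n+1) + q w(n) with q \<noteq> 0, and so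
  do the shifted sequences n \<mapsto> X(n-a), n \<mapsto> Y(n-b), n \<mapsto> X(n-c). Since a solution is
  determined by its values at 0 and 1, the solutions form a two-dimensional space; hence the
  3\<times>3 matrix of these three solutions evaluated at d, e, m is singular, and the identity is
  the expansion of its determinant along the m-column.\<close>

definition lin_rec_sol :: "real \<Rightarrow> real \<Rightarrow> (int \<Rightarrow> real) \<Rightarrow> bool" where
  "lin_rec_sol p q s \<longleftrightarrow> (\<forall>n. s (n + 2) = p * s (n + 1) + q * s n)"

lemma lin_rec_of_nat: "lin_rec p q a b (int k) = rec_fwd p q a b k"
  by (simp add: lin_rec_def)

lemma lin_rec_minus_of_nat: "lin_rec p q a b (- int k) = rec_bwd p q a b k"
  unfolding lin_rec_def by (cases "k = 0") simp_all

lemma lin_rec_sol_lin_rec: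
  assumes "q \<noteq> 0"
  shows "lin_rec_sol p q (lin_rec p q a b)"
  unfolding lin_rec_sol_def
proof
  fix n :: int
  consider k where "n = int k" | "n = -1" | k where "n = - int (Suc (Suc k))"
  proof (cases "n \<ge> 0")
    case True
    then show ?thesis using that(1) by (metis nonneg_eq_int)
  next
    case False
    then have "n = -1 \<or> n = - int (Suc (Suc (nat (- n - 2))))" by linarith
    then show ?thesis using that(2,3) by blast
  qed
  then show "lin_rec p q a b (n + 2) = p * lin_rec p q a b (n + 1) + q * lin_rec p q a b n"
  proof cases
    case 1
    then have "n + 1 = int (Suc k)" "n + 2 = int (Suc (Suc k))" by simp_all
    then show ?thesis
      using 1 by (simp only: lin_rec_of_nat) simp
  next
    case 2
    then show ?thesis
      using assms by (simp add: lin_rec_def)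
  next
    case 3
    then have "n + 1 = - int (Suc k)" "n + 2 = - int k" by simp_all
    then show ?thesis
      using 3 assms by (simp only: lin_rec_minus_of_nat) simp
  qed
qed

lemma lin_rec_sol_shift:
  assumes "lin_rec_sol p q s"
  shows "lin_rec_sol p q (\<lambda>n. s (n - k))"
  unfolding lin_rec_sol_def
proof
  fix n
  have "s (n - k + 2) = p * s (n - k + 1) + q * s (n - k)"
    using assms unfolding lin_rec_sol_def by blast
  then show "s (n + 2 - k) = p * s (n + 1 - k) + q * s (n - k)"
    by (simp add: algebra_simps)
qed

lemma lin_rec_sol_lincomb:
  assumes "lin_rec_sol p q s" "lin_rec_sol p q t"
  shows "lin_rec_sol p q (\<lambda>n. x * s n + y * t n)"
  using assms unfolding lin_rec_sol_def by (simp add: algebra_simps)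

lemma lin_rec_sol_unique:
  assumes "q \<noteq> 0" and s: "lin_rec_sol p q s" and t: "lin_rec_sol p q t"
    and "s 0 = t 0" "s 1 = t 1"
  shows "s n = t n"
proof -
  have "s n = t n \<and> s (n + 1) = t (n + 1)"
  proof (induction n rule: int_induct [where k = 0])
    case base
    show ?case using assms by simp
  next
    case (step1 i)
    have "s (i + 2) = t (i + 2)"
      using s t step1.IH unfolding lin_rec_sol_def by metis
    then show ?case using step1.IH by (simp add: add.assoc)
  next
    case (step2 i)
    have "s (i - 1 + 2) = p * s (i - 1 + 1) + q * s (i - 1)"
      and "t (i - 1 + 2) = p * t (i - 1 + 1) + q * t (i - 1)"
      using s t unfolding lin_rec_sol_def by blast+
    then have "q * s (i - 1) = q * t (i - 1)"
      using step2.IH by (simp add: add.commute)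
    then show ?case using step2.IH \<open>q \<noteq> 0\<close> by simp
  qed
  then show ?thesis ..
qed

lemma lin_rec_sol_eq_basis:
  assumes "q \<noteq> 0" and "lin_rec_sol p q s"
  shows "s n = s 0 * lin_rec p q 1 0 n + s 1 * lin_rec p q 0 1 n"
  using lin_rec_sol_unique [OF assms
      lin_rec_sol_lincomb [OF lin_rec_sol_lin_rec lin_rec_sol_lin_rec, OF \<open>q \<noteq> 0\<close> \<open>q \<noteq> 0\<close>]]
  by (simp add: lin_rec_def)

lemma lin_rec_sol_det3:
  assumes "q \<noteq> 0"
    and f: "lin_rec_sol p q f" and g: "lin_rec_sol p q g" and h: "lin_rec_sol p q h"
  shows "(f d * g e - f e * g d) * h m =
         (h d * g e - h e * g d) * f m + (f d * h e - f e * h d) * g m"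
  unfolding lin_rec_sol_eq_basis [OF \<open>q \<noteq> 0\<close> f, of d]
    lin_rec_sol_eq_basis [OF \<open>q \<noteq> 0\<close> f, of e] lin_rec_sol_eq_basis [OF \<open>q \<noteq> 0\<close> f, of m]
    lin_rec_sol_eq_basis [OF \<open>q \<noteq> 0\<close> g, of d]
    lin_rec_sol_eq_basis [OF \<open>q \<noteq> 0\<close> g, of e] lin_rec_sol_eq_basis [OF \<open>q \<noteq> 0\<close> g, of m]
    lin_rec_sol_eq_basis [OF \<open>q \<noteq> 0\<close> h, of d]
    lin_rec_sol_eq_basis [OF \<open>q \<noteq> 0\<close> h, of e] lin_rec_sol_eq_basis [OF \<open>q \<noteq> 0\<close> h, of m]
  by (simp add: algebra_simps)

lemma lin_rec_sol_Fib_Luc_Jac_Pell: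
  "lin_rec_sol 1 1 Fib" "lin_rec_sol 1 1 Luc" "lin_rec_sol 1 2 Jac" "lin_rec_sol 1 2 JacL"
  "lin_rec_sol 2 1 Pell" "lin_rec_sol 2 1 PellL"
  unfolding Fib_def Luc_def Jac_def JacL_def Pell_def PellL_def
  by (simp_all add: lin_rec_sol_lin_rec)

theorem theorem1:
  fixes X Y :: "int \<Rightarrow> real" and a b c d e m :: int
  assumes "(X, Y) \<in> {(Fib, Luc), (Luc, Fib), (Jac, JacL), (JacL, Jac), (Pell, PellL), (PellL, Pell)}"
  shows "(X (d - a) * Y (e - b) - X (e - a) * Y (d - b)) * X (m - c) =
         (X (d - c) * Y (e - b) - X (e - c) * Y (d - b)) * X (m - a)
       + (X (d - a) * X (e - c) - X (e - a) * X (d - c)) * Y (m - b)"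
proof -
  have "\<exists>p q. lin_rec_sol p q X \<and> lin_rec_sol p q Y \<and> q \<noteq> 0"
    using assms lin_rec_sol_Fib_Luc_Jac_Pell by auto (metis one_neq_zero zero_neq_numeral)+
  then obtain p q where "q \<noteq> 0" and X: "lin_rec_sol p q X" and Y: "lin_rec_sol p q Y"
    by blast
  show ?thesis
    using lin_rec_sol_det3 [OF \<open>q \<noteq> 0\<close> lin_rec_sol_shift [OF X, of a]
        lin_rec_sol_shift [OF Y, of b] lin_rec_sol_shift [OF X, of c], of d e m]
    by simp
qed

end
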